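(* In the Ewens setting, $W(1,0)=\theta$, and for every $N\ge2$: $$W(N,0)=(N-1)\,W(N-1,0),$$ $$W(N,k)=(N-1)\,W(N-1,k)+\frac{(N-2)!}{(k-1)!}\,\theta\,[k]_\theta\qquad\text{for }1\le k\le N-1,$$ where $W(N-1,N-1):=0$.
   Context: Permutations of $\{1,\dots,N\}$ are written in one-line notation; $\mathfrak S_N$ is the set of all of them. An entry $\pi_j$ is a left-to-right maximum if $\pi_j>\pi_i$ for all $i<j$; $\mathrm{lrm}(\pi)$ is the number of left-to-right maxima of $\pi$. Let $\theta>0$ (or $\theta$ an indeterminate). For $0\le k\le N-1$, a permutation $\pi\in\mathfrak S_N$ is $k$-winnable if the first index $j>k$ such that $\pi_j$ is a left-to-right maximum satisfies $\pi_j=N$. Equivalently, $\pi$ is won by the strategy that rejects the first $k$ candidates and accepts the next left-to-right maximum. Ewens setting: $W(N,k)=\sum_{k\text{-winnable }\pi\in\mathfrak S_N}\theta^{\mathrm{lrm}(\pi)}$, with $W(N,N):=0$, and $[m]_\theta=\theta(\theta+1)\cdots(\theta+m-1)$ with $[0]_\theta=1$. *)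

theory Defs
  imports Complex_Main "HOL-Combinatorics.Permutations"
begin

text \<open>A permutation of {1..N} in one-line notation is a function p with p permutes {1..N};
  the j-th entry is p j.\<close>

definition is_lrm :: "(nat \<Rightarrow> nat) \<Rightarrow> nat \<Rightarrow> bool" where
  "is_lrm p j \<longleftrightarrow> (\<forall>i. 1 \<le> i \<and> i < j \<longrightarrow> p i < p j)"

definition lrm :: "nat \<Rightarrow> (nat \<Rightarrow> nat) \<Rightarrow> nat" where
  "lrm N p = card {j \<in> {1..N}. is_lrm p j}"

definition winnable :: "nat \<Rightarrow> nat \<Rightarrow> (nat \<Rightarrow> nat) \<Rightarrow> bool" where
  "winnable N k p \<longleftrightarrow>
     (\<exists>j. k < j \<and> j \<le> N \<and> is_lrm p j \<and> p j = N \<and>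
          (\<forall>i. k < i \<and> i < j \<longrightarrow> \<not> is_lrm p i))"

definition W :: "real \<Rightarrow> nat \<Rightarrow> nat \<Rightarrow> real" where
  "W \<theta> N k = (if N \<le> k then 0
     else (\<Sum>p \<in> {p. p permutes {1..N} \<and> winnable N k p}. \<theta> ^ lrm N p))"

end

theory Submission
  imports Defs
begin

text \<open>Every permutation of \<open>{1..n+1}\<close> arises uniquely from a permutation \<open>\<sigma>\<close> of \<open>{1..n}\<close> by
  appending a last entry \<open>v\<close> and raising the entries of \<open>\<sigma>\<close> that are \<open>\<ge> v\<close> by one. This keeps
  the left-to-right maxima among the first \<open>n\<close> positions, and the new last entry is one exactly
  when \<open>v = n+1\<close>. For \<open>v \<le> n\<close> the maximum \<open>n+1\<close> takes the place of \<open>n\<close> in \<open>\<sigma>\<close>, so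
  \<open>k\<close>-winnability is inherited from \<open>\<sigma>\<close>; for \<open>v = n+1\<close> the permutation gains a left-to-right
  maximum and is \<open>k\<close>-winnable iff \<open>k \<le> n\<close> and \<open>\<sigma>\<close> has no left-to-right maximum after
  position \<open>k\<close>. Hence \<open>W(n+1,k) = n W(n,k) + \<theta> F(n,k)\<close> for \<open>k \<le> n\<close>, where \<open>F(n,k)\<close> is the
  weight of the permutations without left-to-right maxima after position \<open>k\<close>. The same
  decomposition gives \<open>F(n+1,k) = (n + [n < k] \<theta>) F(n,k)\<close>, which solves to \<open>F(n,k) = [\<theta>]\<^sub>n\<close>
  for \<open>n \<le> k\<close>, to \<open>(n-1)!/(k-1)! [\<theta>]\<^sub>k\<close> for \<open>1 \<le> k \<le> n\<close>, and to \<open>0\<close> for \<open>k = 0 < n\<close>.\<close>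

definition shift_up :: "nat \<Rightarrow> nat \<Rightarrow> nat" where
  "shift_up v x = (if v \<le> x then Suc x else x)"

lemma shift_up_less_iff [simp]: "shift_up v x < shift_up v y \<longleftrightarrow> x < y"
  by (auto simp: shift_up_def)

lemma shift_up_eq_iff [simp]: "shift_up v x = shift_up v y \<longleftrightarrow> x = y"
  by (auto simp: shift_up_def)

definition perm_snoc :: "nat \<Rightarrow> nat \<Rightarrow> (nat \<Rightarrow> nat) \<Rightarrow> nat \<Rightarrow> nat" where
  "perm_snoc n v \<sigma> = (\<lambda>i. if i = Suc n then v else if i \<in> {1..n} then shift_up v (\<sigma> i) else i)"

lemma perm_snoc_last [simp]: "perm_snoc n v \<sigma> (Suc n) = v"
  by (simp add: perm_snoc_def)

lemma perm_snoc_apply: "j \<in> {1..n} \<Longrightarrow> perm_snoc n v \<sigma> j = shift_up v (\<sigma> j)"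
  by (simp add: perm_snoc_def)

lemma shift_up_image:
  assumes "v \<in> {1..Suc n}"
  shows "shift_up v ` {1..n} = {1..Suc n} - {v}"
proof (intro equalityI subsetI)
  fix y assume "y \<in> {1..Suc n} - {v}"
  then have "y = shift_up v (if v < y then y - 1 else y)"
    and "(if v < y then y - 1 else y) \<in> {1..n}"
    using assms by (auto simp: shift_up_def)
  then show "y \<in> shift_up v ` {1..n}" by blast
qed (use assms in \<open>auto simp: shift_up_def\<close>)

lemma perm_snoc_image:
  assumes "\<sigma> permutes {1..n}" and "v \<in> {1..Suc n}"
  shows "perm_snoc n v \<sigma> ` {1..n} = {1..Suc n} - {v}"
proof -
  have "perm_snoc n v \<sigma> ` {1..n} = shift_up v ` \<sigma> ` {1..n}"
    by (auto simp: perm_snoc_apply image_image intro!: image_cong)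
  also have "\<dots> = {1..Suc n} - {v}"
    using permutes_image[OF assms(1)] shift_up_image[OF assms(2)] by simp
  finally show ?thesis .
qed

lemma perm_snoc_permutes:
  assumes \<sigma>: "\<sigma> permutes {1..n}" and v: "v \<in> {1..Suc n}"
  shows "perm_snoc n v \<sigma> permutes {1..Suc n}"
proof (rule bij_imp_permutes)
  have "inj_on (perm_snoc n v \<sigma>) {1..n}"
    using permutes_inj_on[OF \<sigma>] by (auto simp: inj_on_def perm_snoc_apply)
  then have "bij_betw (perm_snoc n v \<sigma>) {1..n} ({1..Suc n} - {v})"
    using perm_snoc_image[OF assms] by (simp add: bij_betw_def)
  then have "bij_betw (perm_snoc n v \<sigma>)
      ({1..n} \<union> {Suc n}) (({1..Suc n} - {v}) \<union> {perm_snoc n v \<sigma> (Suc n)})"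
    by (rule notIn_Un_bij_betw[rotated 2]) auto
  moreover have "{1..n} \<union> {Suc n} = {1..Suc n}"
    and "({1..Suc n} - {v}) \<union> {perm_snoc n v \<sigma> (Suc n)} = {1..Suc n}"
    using v by auto
  ultimately show "bij_betw (perm_snoc n v \<sigma>) {1..Suc n} {1..Suc n}" by simp
  show "x \<notin> {1..Suc n} \<Longrightarrow> perm_snoc n v \<sigma> x = x" for x
    by (auto simp: perm_snoc_def)
qed

lemma perm_snoc_eq_iff:
  assumes "\<sigma> permutes {1..n}" and "\<sigma>' permutes {1..n}"
  shows "perm_snoc n v \<sigma> = perm_snoc n v' \<sigma>' \<longleftrightarrow> v = v' \<and> \<sigma> = \<sigma>'"
proof
  assume eq: "perm_snoc n v \<sigma> = perm_snoc n v' \<sigma>'"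
  then have "v = v'" by (metis perm_snoc_last)
  moreover have "\<sigma> i = \<sigma>' i" for i
    using assms fun_cong[OF eq, of i] \<open>v = v'\<close>
    by (cases "i \<in> {1..n}") (simp_all add: perm_snoc_apply permutes_not_in)
  ultimately show "v = v' \<and> \<sigma> = \<sigma>'" by auto
qed simp

lemma bij_betw_perm_snoc:
  "bij_betw (\<lambda>(v, \<sigma>). perm_snoc n v \<sigma>) ({1..Suc n} \<times> {\<sigma>. \<sigma> permutes {1..n}})
     {p. p permutes {1..Suc n}}"
  (is "bij_betw ?f ?A ?B")
proof -
  have inj: "inj_on ?f ?A"
    by (auto intro!: inj_onI simp: perm_snoc_eq_iff)
  moreover have "?f ` ?A \<subseteq> ?B"
    using perm_snoc_permutes by force
  moreover have "card ?A = card ?B"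
    by (simp add: card_cartesian_product card_permutations)
  ultimately have "?f ` ?A = ?B"
    by (intro card_subset_eq) (simp_all add: finite_permutations card_image)
  with inj show ?thesis by (simp add: bij_betw_def)
qed

lemma sum_permutes_Suc:
  "(\<Sum>p | p permutes {1..Suc n}. g p) =
     (\<Sum>v\<in>{1..Suc n}. \<Sum>\<sigma> | \<sigma> permutes {1..n}. g (perm_snoc n v \<sigma>))"
proof -
  have "(\<Sum>p | p permutes {1..Suc n}. g p) =
      (\<Sum>(v, \<sigma>) \<in> {1..Suc n} \<times> {\<sigma>. \<sigma> permutes {1..n}}. g (perm_snoc n v \<sigma>))"
    using sum.reindex_bij_betw[OF bij_betw_perm_snoc, of g] by (simp add: case_prod_unfold)
  then show ?thesis by (simp add: sum.cartesian_product)
qed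

lemma sum_permutes_Suc_split:
  fixes g f h :: "(nat \<Rightarrow> nat) \<Rightarrow> 'a::semiring_1"
  assumes "\<And>v \<sigma>. \<sigma> permutes {1..n} \<Longrightarrow> v \<in> {1..n} \<Longrightarrow> g (perm_snoc n v \<sigma>) = f \<sigma>"
    and "\<And>\<sigma>. \<sigma> permutes {1..n} \<Longrightarrow> g (perm_snoc n (Suc n) \<sigma>) = h \<sigma>"
  shows "(\<Sum>p | p permutes {1..Suc n}. g p) =
    of_nat n * (\<Sum>\<sigma> | \<sigma> permutes {1..n}. f \<sigma>) + (\<Sum>\<sigma> | \<sigma> permutes {1..n}. h \<sigma>)"
proof -
  have "(\<Sum>v\<in>{1..n}. \<Sum>\<sigma> | \<sigma> permutes {1..n}. g (perm_snoc n v \<sigma>)) =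
      (\<Sum>v\<in>{1..n}. \<Sum>\<sigma> | \<sigma> permutes {1..n}. f \<sigma>)"
    using assms(1) by (intro sum.cong) auto
  moreover have "(\<Sum>\<sigma> | \<sigma> permutes {1..n}. g (perm_snoc n (Suc n) \<sigma>)) =
      (\<Sum>\<sigma> | \<sigma> permutes {1..n}. h \<sigma>)"
    using assms(2) by (intro sum.cong) auto
  ultimately show ?thesis
    unfolding sum_permutes_Suc by simp
qed

definition no_lrm_after :: "nat \<Rightarrow> nat \<Rightarrow> (nat \<Rightarrow> nat) \<Rightarrow> bool" where
  "no_lrm_after N k p \<longleftrightarrow> (\<forall>i. k < i \<and> i \<le> N \<longrightarrow> \<not> is_lrm p i)"

lemma is_lrm_perm_snoc:
  assumes "j \<in> {1..n}"
  shows "is_lrm (perm_snoc n v \<sigma>) j \<longleftrightarrow> is_lrm \<sigma> j"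
  using assms by (simp add: is_lrm_def perm_snoc_apply)

lemma is_lrm_perm_snoc_last:
  assumes "\<sigma> permutes {1..n}" and "v \<in> {1..Suc n}"
  shows "is_lrm (perm_snoc n v \<sigma>) (Suc n) \<longleftrightarrow> v = Suc n"
proof -
  have "is_lrm (perm_snoc n v \<sigma>) (Suc n) \<longleftrightarrow> (\<forall>x \<in> perm_snoc n v \<sigma> ` {1..n}. x < v)"
    by (auto simp: is_lrm_def)
  also have "\<dots> \<longleftrightarrow> (\<forall>x \<in> {1..Suc n} - {v}. x < v)"
    by (simp only: perm_snoc_image[OF assms])
  also have "\<dots> \<longleftrightarrow> v = Suc n"
  proof
    assume "\<forall>x \<in> {1..Suc n} - {v}. x < v"
    then show "v = Suc n"
      using bspec[of _ _ "Suc n"] assms(2) by fastforce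
  qed auto
  finally show ?thesis .
qed

lemma lrm_perm_snoc:
  assumes "\<sigma> permutes {1..n}" and "v \<in> {1..Suc n}"
  shows "lrm (Suc n) (perm_snoc n v \<sigma>) = lrm n \<sigma> + (if v = Suc n then 1 else 0)"
proof -
  have "{j \<in> {1..Suc n}. is_lrm (perm_snoc n v \<sigma>) j} =
      {j \<in> {1..n}. is_lrm \<sigma> j} \<union> (if v = Suc n then {Suc n} else {})"
    using is_lrm_perm_snoc is_lrm_perm_snoc_last[OF assms] by (auto simp: le_Suc_eq)
  then show ?thesis by (simp add: lrm_def card_insert_if)
qed

lemma no_lrm_after_perm_snoc:
  assumes "\<sigma> permutes {1..n}" and "v \<in> {1..Suc n}"
  shows "no_lrm_after (Suc n) k (perm_snoc n v \<sigma>) \<longleftrightarrow>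
    (k \<le> n \<longrightarrow> v \<noteq> Suc n) \<and> no_lrm_after n k \<sigma>"
  using is_lrm_perm_snoc is_lrm_perm_snoc_last[OF assms]
  by (auto simp: no_lrm_after_def le_Suc_eq)

lemma winnable_perm_snoc:
  assumes \<sigma>: "\<sigma> permutes {1..n}" and v: "v \<in> {1..n}"
  shows "winnable (Suc n) k (perm_snoc n v \<sigma>) \<longleftrightarrow> winnable n k \<sigma>"
proof -
  let ?p = "perm_snoc n v \<sigma>"
  have top: "is_lrm ?p j \<and> ?p j = Suc n \<longleftrightarrow> j \<le> n \<and> is_lrm \<sigma> j \<and> \<sigma> j = n"
    if "k < j" "j \<le> Suc n" for j
  proof (cases "j = Suc n")
    case False
    with that have "j \<in> {1..n}" by auto
    with permutes_in_image[OF \<sigma>, of j] v show ?thesis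
      by (auto simp: is_lrm_perm_snoc perm_snoc_apply shift_up_def)
  qed (use v in auto)
  have before: "(\<forall>i. k < i \<and> i < j \<longrightarrow> \<not> is_lrm ?p i) \<longleftrightarrow>
      (\<forall>i. k < i \<and> i < j \<longrightarrow> \<not> is_lrm \<sigma> i)"
    if "j \<le> Suc n" for j
    using that by (auto simp: is_lrm_perm_snoc)
  show ?thesis
  proof
    assume "winnable (Suc n) k ?p"
    then obtain j where "k < j" "j \<le> Suc n" "is_lrm ?p j \<and> ?p j = Suc n"
      "\<forall>i. k < i \<and> i < j \<longrightarrow> \<not> is_lrm ?p i"
      unfolding winnable_def by blast
    with top before show "winnable n k \<sigma>"
      unfolding winnable_def by blast
  next
    assume "winnable n k \<sigma>"
    then obtain j where "k < j" "j \<le> n" "is_lrm \<sigma> j" "\<sigma> j = n"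
      "\<forall>i. k < i \<and> i < j \<longrightarrow> \<not> is_lrm \<sigma> i"
      unfolding winnable_def by blast
    with top[of j] before[of j] show "winnable (Suc n) k ?p"
      unfolding winnable_def by auto
  qed
qed

lemma winnable_perm_snoc_last:
  assumes \<sigma>: "\<sigma> permutes {1..n}"
  shows "winnable (Suc n) k (perm_snoc n (Suc n) \<sigma>) \<longleftrightarrow> k \<le> n \<and> no_lrm_after n k \<sigma>"
proof -
  let ?p = "perm_snoc n (Suc n) \<sigma>"
  have "?p j = Suc n \<longleftrightarrow> j = Suc n" if "0 < j" "j \<le> Suc n" for j
  proof (cases "j = Suc n")
    case False
    with that have "j \<in> {1..n}" by auto
    with permutes_in_image[OF \<sigma>, of j] False show ?thesis
      by (auto simp: perm_snoc_apply shift_up_def)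
  qed simp
  then have "winnable (Suc n) k ?p \<longleftrightarrow>
      k < Suc n \<and> (\<forall>i. k < i \<and> i < Suc n \<longrightarrow> \<not> is_lrm ?p i)"
    using is_lrm_perm_snoc_last[OF \<sigma>, of "Suc n"] unfolding winnable_def by auto
  then show ?thesis
    by (auto simp: no_lrm_after_def is_lrm_perm_snoc)
qed

definition no_lrm_after_weight :: "real \<Rightarrow> nat \<Rightarrow> nat \<Rightarrow> real" where
  "no_lrm_after_weight \<theta> n k =
     (\<Sum>\<sigma> | \<sigma> permutes {1..n}. if no_lrm_after n k \<sigma> then \<theta> ^ lrm n \<sigma> else 0)"

lemma W_eq_sum:
  "W \<theta> N k = (\<Sum>p | p permutes {1..N}. if winnable N k p then \<theta> ^ lrm N p else 0)"
proof (cases "N \<le> k")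
  case True
  then have "\<not> winnable N k p" for p by (auto simp: winnable_def)
  with True show ?thesis by (simp add: W_def)
qed (simp add: W_def sum.inter_filter[symmetric] finite_permutations)

lemma W_Suc:
  "W \<theta> (Suc n) k = real n * W \<theta> n k + (if k \<le> n then \<theta> * no_lrm_after_weight \<theta> n k else 0)"
proof -
  have "W \<theta> (Suc n) k = real n * W \<theta> n k +
      (\<Sum>\<sigma> | \<sigma> permutes {1..n}.
         if k \<le> n then \<theta> * (if no_lrm_after n k \<sigma> then \<theta> ^ lrm n \<sigma> else 0) else 0)"
    unfolding W_eq_sum
    by (rule sum_permutes_Suc_split)
      (auto simp: winnable_perm_snoc winnable_perm_snoc_last lrm_perm_snoc)
  then show ?thesis
    by (simp add: no_lrm_after_weight_def sum_distrib_left)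
qed

lemma no_lrm_after_weight_0: "no_lrm_after_weight \<theta> 0 k = 1"
  by (simp add: no_lrm_after_weight_def no_lrm_after_def lrm_def)

lemma no_lrm_after_weight_Suc:
  "no_lrm_after_weight \<theta> (Suc n) k =
     real n * no_lrm_after_weight \<theta> n k + (if n < k then \<theta> * no_lrm_after_weight \<theta> n k else 0)"
proof -
  have "no_lrm_after_weight \<theta> (Suc n) k = real n * no_lrm_after_weight \<theta> n k +
      (\<Sum>\<sigma> | \<sigma> permutes {1..n}.
         if n < k then \<theta> * (if no_lrm_after n k \<sigma> then \<theta> ^ lrm n \<sigma> else 0) else 0)"
    unfolding no_lrm_after_weight_def
    by (rule sum_permutes_Suc_split)
      (auto simp: no_lrm_after_perm_snoc lrm_perm_snoc)
  then show ?thesis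
    by (simp add: no_lrm_after_weight_def sum_distrib_left)
qed

lemma no_lrm_after_weight_Suc_0: "no_lrm_after_weight \<theta> (Suc n) 0 = 0"
  by (induction n) (simp_all add: no_lrm_after_weight_Suc no_lrm_after_weight_0)

lemma no_lrm_after_weight_le:
  "n \<le> k \<Longrightarrow> no_lrm_after_weight \<theta> n k = pochhammer \<theta> n"
  by (induction n)
    (auto simp: no_lrm_after_weight_0 no_lrm_after_weight_Suc pochhammer_Suc algebra_simps)

lemma no_lrm_after_weight_ge:
  assumes "1 \<le> k" and "k \<le> n"
  shows "no_lrm_after_weight \<theta> n k = fact (n - 1) / fact (k - 1) * pochhammer \<theta> k"
  using assms(2)
proof (induction n rule: dec_induct)
  case base
  then show ?case by (simp add: no_lrm_after_weight_le)
next
  case (step m)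
  have "fact m = real m * fact (m - 1)"
    using step.hyps assms(1) by (simp add: fact_reduce)
  with step show ?case
    by (simp add: no_lrm_after_weight_Suc)
qed

theorem theorem4p3:
  fixes \<theta> :: real
  assumes "\<theta> > 0"
  shows "W \<theta> 1 0 = \<theta> \<and>
    (\<forall>N \<ge> 2.
       W \<theta> N 0 = real (N - 1) * W \<theta> (N - 1) 0 \<and>
       (\<forall>k. 1 \<le> k \<and> k \<le> N - 1 \<longrightarrow>
          W \<theta> N k = real (N - 1) * W \<theta> (N - 1) k
                     + (fact (N - 2) / fact (k - 1)) * \<theta> * pochhammer \<theta> k))"
proof (intro conjI allI impI)
  show "W \<theta> 1 0 = \<theta>"
    using W_Suc[of \<theta> 0 0] by (simp add: no_lrm_after_weight_0)
next
  fix N :: nat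
  assume "2 \<le> N"
  then obtain n where N: "N = Suc (Suc n)"
    by (metis add_2_eq_Suc le_Suc_ex)
  show "W \<theta> N 0 = real (N - 1) * W \<theta> (N - 1) 0"
    using W_Suc[of \<theta> "Suc n" 0] by (simp add: N no_lrm_after_weight_Suc_0)
  fix k
  assume "1 \<le> k \<and> k \<le> N - 1"
  then show "W \<theta> N k = real (N - 1) * W \<theta> (N - 1) k
      + (fact (N - 2) / fact (k - 1)) * \<theta> * pochhammer \<theta> k"
    using W_Suc[of \<theta> "Suc n" k] by (simp add: N no_lrm_after_weight_ge)
qed

end
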